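(* Let $w,\Delta w\in\mathbb{R}$ with $w+\Delta w\neq 0$, and let $x\in\mathbb{R}$ with fractional part $\operatorname{frac}(x)=x-\lfloor x\rfloor$. Define the element-wise error $\mathrm{error}^{EW}(\delta)=(w+\Delta w)\,\delta+\Delta w\, x$ for $\delta\in\mathbb{R}$, the rounding-down and rounding-up perturbations $\Delta x^{-}=-\operatorname{frac}(x)$ and $\Delta x^{+}=1-\operatorname{frac}(x)$, and the border $B^E(x)=\frac{\Delta w}{w+\Delta w}\,x+\frac{1}{2}$. Then: (i) if $\operatorname{frac}(x)<B^E(x)$, then $\mathrm{error}^{EW}(\Delta x^{-})^2<\mathrm{error}^{EW}(\Delta x^{+})^2$; (ii) if $\operatorname{frac}(x)>B^E(x)$, then $\mathrm{error}^{EW}(\Delta x^{-})^2>\mathrm{error}^{EW}(\Delta x^{+})^2$. That is, the border $B^E$ is valid: rounding $x$ down when its fractional part is below $B^E(x)$ and up when it is above gives the smaller squared element-wise error.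
   Context: All quantities are scaled by the quantization step size. $w$ is a weight value, $\Delta w$ its quantization error, $x$ an activation value; quantizing $x$ to an integer adds either $\Delta x^{-}$ (rounding down) or $\Delta x^{+}$ (rounding up). The element-wise error of the quantized product $(w+\Delta w)(x+\delta)$ relative to $wx$ is $(w+\Delta w)\delta+\Delta w x$. A border function $B$ is called valid if for every $x$ with $\operatorname{frac}(x)<B(x)$ rounding down gives strictly smaller squared element-wise error than rounding up, and vice versa. *)

theory Defs
  imports Complex_Main
begin

definition error_EW :: "real \<Rightarrow> real \<Rightarrow> real \<Rightarrow> real \<Rightarrow> real" where
  "error_EW w dw x \<delta> = (w + dw) * \<delta> + dw * x"

definition dx_minus :: "real \<Rightarrow> real" where
  "dx_minus x = - frac x"

definition dx_plus :: "real \<Rightarrow> real" where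
  "dx_plus x = 1 - frac x"

definition border_E :: "real \<Rightarrow> real \<Rightarrow> real \<Rightarrow> real" where
  "border_E w dw x = dw / (w + dw) * x + 1 / 2"

end

theory Submission
  imports Defs
begin

(* The two errors differ by exactly w + dw, so the difference of their squares is
   w + dw times their sum, which is affine in frac x and vanishes at the border. *)
lemma error_EW_round_up_minus_round_down:
  fixes w dw x :: real
  assumes "w + dw \<noteq> 0"
  shows "(error_EW w dw x (dx_plus x))\<^sup>2 - (error_EW w dw x (dx_minus x))\<^sup>2
       = 2 * (w + dw)\<^sup>2 * (border_E w dw x - frac x)"
  using assms
  by (simp add: error_EW_def dx_plus_def dx_minus_def border_E_def field_simps power2_eq_square)

theorem theorem1:
  fixes w dw x :: real
  assumes "w + dw \<noteq> 0"
  shows "(frac x < border_E w dw x \<longrightarrow>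
            (error_EW w dw x (dx_minus x))\<^sup>2 < (error_EW w dw x (dx_plus x))\<^sup>2)
       \<and> (frac x > border_E w dw x \<longrightarrow>
            (error_EW w dw x (dx_minus x))\<^sup>2 > (error_EW w dw x (dx_plus x))\<^sup>2)"
proof -
  let ?gap = "(error_EW w dw x (dx_plus x))\<^sup>2 - (error_EW w dw x (dx_minus x))\<^sup>2"
  have "2 * (w + dw)\<^sup>2 > 0"
    using assms by simp
  then have "?gap > 0 \<longleftrightarrow> frac x < border_E w dw x"
    and "?gap < 0 \<longleftrightarrow> frac x > border_E w dw x"
    unfolding error_EW_round_up_minus_round_down [OF assms]
    by (simp_all add: zero_less_mult_iff mult_less_0_iff)
  then show ?thesis
    by linarith
qed

end
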